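(* If $G$ is a graph and $v\in V(G)$, then $St_{dom}(G)\le St_{dom}(G-v)+1$.
   Context: A dominated coloring of a graph is a proper coloring in which every color class is dominated by at least one vertex, i.e. for each color class $C$ there is a vertex adjacent to every vertex of $C$; $\chi_{dom}(G)$ is the minimum number of colors in a dominated coloring. The dom-stability $St_{dom}(G)$ is the minimum number of vertices of $G$ whose removal changes the dominated chromatic number of $G$. *)

theory Defs
  imports Main "HOL-Library.Extended_Nat"
begin

definition is_graph :: "'a set \<Rightarrow> 'a set set \<Rightarrow> bool" where
  "is_graph V E \<longleftrightarrow> finite V \<and> (\<forall>e\<in>E. \<exists>u v. e = {u, v} \<and> u \<in> V \<and> v \<in> V \<and> u \<noteq> v)"

definition del_verts_V :: "'a set \<Rightarrow> 'a set \<Rightarrow> 'a set" where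
  "del_verts_V V S = V - S"

definition del_verts_E :: "'a set set \<Rightarrow> 'a set \<Rightarrow> 'a set set" where
  "del_verts_E E S = {e \<in> E. e \<inter> S = {}}"

definition dominated_coloring :: "'a set \<Rightarrow> 'a set set \<Rightarrow> ('a \<Rightarrow> nat) \<Rightarrow> nat \<Rightarrow> bool" where
  "dominated_coloring V E c k \<longleftrightarrow>
     (\<forall>v\<in>V. c v < k) \<and>
     (\<forall>u\<in>V. \<forall>v\<in>V. {u, v} \<in> E \<longrightarrow> c u \<noteq> c v) \<and>
     (\<forall>i<k. {v \<in> V. c v = i} \<noteq> {} \<longrightarrow>
        (\<exists>w\<in>V. \<forall>v\<in>V. c v = i \<longrightarrow> {w, v} \<in> E))"

text \<open>Dominated chromatic number; \<infinity> if no dominated coloring exists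
  (e.g. graph with an isolated vertex).\<close>
definition chi_dom :: "'a set \<Rightarrow> 'a set set \<Rightarrow> enat" where
  "chi_dom V E = Inf {enat k | k. \<exists>c. dominated_coloring V E c k}"

text \<open>Dom-stability: minimum number of vertices whose removal changes chi_dom;
  \<infinity> if no such vertex set exists.\<close>
definition st_dom :: "'a set \<Rightarrow> 'a set set \<Rightarrow> enat" where
  "st_dom V E = Inf {enat (card S) | S. S \<subseteq> V \<and>
      chi_dom (del_verts_V V S) (del_verts_E E S) \<noteq> chi_dom V E}"

end

theory Submission
  imports Defs
begin

text \<open>If \<open>\<chi>\<^sub>d\<^sub>o\<^sub>m(G - v) \<noteq> \<chi>\<^sub>d\<^sub>o\<^sub>m(G)\<close>, deleting \<open>v\<close> alone changes \<open>\<chi>\<^sub>d\<^sub>o\<^sub>m(G)\<close>.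
  Otherwise take a minimum set \<open>S\<close> whose deletion changes \<open>\<chi>\<^sub>d\<^sub>o\<^sub>m(G - v)\<close>; since
  \<open>(G - v) - S = G - (S \<union> {v})\<close> and \<open>\<chi>\<^sub>d\<^sub>o\<^sub>m(G - v) = \<chi>\<^sub>d\<^sub>o\<^sub>m(G)\<close>, deleting
  \<open>S \<union> {v}\<close> changes \<open>\<chi>\<^sub>d\<^sub>o\<^sub>m(G)\<close>.\<close>

lemma Inf_enat_in: "(A::enat set) \<noteq> {} \<Longrightarrow> Inf A \<in> A"
  unfolding Inf_enat_def by (auto intro: LeastI)

lemma del_verts_V_del_verts_V: "del_verts_V (del_verts_V V S) T = del_verts_V V (S \<union> T)"
  unfolding del_verts_V_def by auto

lemma del_verts_E_del_verts_E: "del_verts_E (del_verts_E E S) T = del_verts_E E (S \<union> T)"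
  unfolding del_verts_E_def by auto

lemma st_dom_le_card:
  assumes "S \<subseteq> V" and "chi_dom (del_verts_V V S) (del_verts_E E S) \<noteq> chi_dom V E"
  shows "st_dom V E \<le> card S"
  unfolding st_dom_def using assms by (blast intro: Inf_lower)

lemma st_dom_attained:
  assumes "st_dom V E \<noteq> \<infinity>"
  obtains S where "S \<subseteq> V" and "chi_dom (del_verts_V V S) (del_verts_E E S) \<noteq> chi_dom V E"
    and "st_dom V E = card S"
proof -
  let ?A = "{enat (card S) | S. S \<subseteq> V \<and>
      chi_dom (del_verts_V V S) (del_verts_E E S) \<noteq> chi_dom V E}"
  have "?A \<noteq> {}"
    using assms unfolding st_dom_def by (metis Inf_empty top_enat_def)
  then have "st_dom V E \<in> ?A"
    unfolding st_dom_def by (rule Inf_enat_in)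
  then show ?thesis using that by blast
qed

lemma st_dom_le_st_dom_del_vert_plus_one:
  assumes "v \<in> V"
  shows "st_dom V E \<le> st_dom (del_verts_V V {v}) (del_verts_E E {v}) + 1"
proof (cases "chi_dom (del_verts_V V {v}) (del_verts_E E {v}) = chi_dom V E")
  case False
  then have "st_dom V E \<le> card {v}"
    using assms by (intro st_dom_le_card) auto
  also have "\<dots> = 1"
    by (simp add: one_enat_def)
  also have "\<dots> \<le> st_dom (del_verts_V V {v}) (del_verts_E E {v}) + 1"
    by simp
  finally show ?thesis .
next
  case chi_dom_eq: True
  show ?thesis
  proof (cases "st_dom (del_verts_V V {v}) (del_verts_E E {v}) = \<infinity>")
    case True
    then show ?thesis by simp
  next
    case False
    then obtain S where S: "S \<subseteq> del_verts_V V {v}"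
      and changes: "chi_dom (del_verts_V (del_verts_V V {v}) S)
                      (del_verts_E (del_verts_E E {v}) S) \<noteq> chi_dom V E"
      and st_dom_eq: "st_dom (del_verts_V V {v}) (del_verts_E E {v}) = card S"
      using chi_dom_eq by (metis st_dom_attained)
    have "st_dom V E \<le> card (insert v S)"
    proof (rule st_dom_le_card)
      show "insert v S \<subseteq> V"
        using S assms unfolding del_verts_V_def by auto
      show "chi_dom (del_verts_V V (insert v S)) (del_verts_E E (insert v S)) \<noteq> chi_dom V E"
        using changes by (simp add: del_verts_V_del_verts_V del_verts_E_del_verts_E)
    qed
    also have "card (insert v S) \<le> card S + 1"
      \<comment> \<open>true even for infinite \<open>S\<close>, so no finiteness of \<open>V\<close> is needed\<close>
      by (rule card_insert_le_m1) auto
    finally show ?thesis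
      using st_dom_eq by (simp add: one_enat_def)
  qed
qed

theorem mainTheorem12:
  fixes V :: "'a set" and E :: "'a set set" and v :: 'a
  assumes "is_graph V E" and "v \<in> V"
  shows "st_dom V E \<le> st_dom (del_verts_V V {v}) (del_verts_E E {v}) + 1"
  using assms(2) by (rule st_dom_le_st_dom_del_vert_plus_one)

end
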